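(* Let $f(x)=1+a_1x+\cdots+a_dx^d\in\mathbb Z[x]$ with $d\ge2$ and $a_d\neq0$, and let $e_f(k)$ ($k\ge1$) be the unique integers with $f(x)=\prod_{k\ge1}(1-x^k)^{e_f(k)}$ in $\mathbb Z[[x]]$. Let $\alpha_1,\dots,\alpha_d$ be the complex roots of $f$ (with multiplicity), ordered so that $|\alpha_1|\le|\alpha_2|\le\cdots\le|\alpha_d|$, and assume $|\alpha_1|<|\alpha_2|$. Then for every $k\ge1$, $$\Big|e_f(k)-\frac{\alpha_1^{-k}}{k}\Big|\le\frac{\tau(k)}{k}\big(|\alpha_1|^{-k/2}+d\,|\alpha_2|^{-k}\big),$$ where $\tau(k)$ is the number of positive divisors of $k$. If $d=1$ (so $f$ has a single root $\alpha_1$), then $|e_f(k)-\alpha_1^{-k}/k|\le\frac{\tau(k)}{k}|\alpha_1|^{-k/2}$.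
   Context: For any $f\in\mathbb Z[[x]]$ with $f(0)=1$ there exist unique integers $e_f(k)$, $k\ge1$, with $f(x)=\prod_{k\ge1}(1-x^k)^{e_f(k)}$ in $\mathbb Z[[x]]$. *)

theory Defs
  imports Complex_Main "HOL-Computational_Algebra.Polynomial_FPS"
begin

text \<open>The identity f(x) = prod_{k>=1} (1 - x^k)^(e k) in Z[[x]], expressed without
  inverses: for every N, modulo x^(N+1) (factors with k > N are 1 modulo x^(N+1)),
  f * prod_{k<=N, e k<0} (1-x^k)^(-e k) = prod_{k<=N, e k>0} (1-x^k)^(e k).\<close>
definition euler_product_exps :: "int poly \<Rightarrow> (nat \<Rightarrow> int) \<Rightarrow> bool" where
  "euler_product_exps f e \<longleftrightarrow>
     (\<forall>N n. n \<le> N \<longrightarrow>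
        fps_nth (fps_of_poly f * (\<Prod>k\<in>{1..N}. (1 - fps_X ^ k) ^ nat (- e k))) n
      = fps_nth (\<Prod>k\<in>{1..N}. (1 - fps_X ^ k) ^ nat (e k)) n)"

definition ef :: "int poly \<Rightarrow> nat \<Rightarrow> int" where
  "ef f = (THE e. euler_product_exps f e \<and> e 0 = 0)"

definition num_divisors :: "nat \<Rightarrow> nat" where
  "num_divisors k = card {m. m dvd k}"

end

theory Submission
  imports Defs "HOL-Computational_Algebra.Squarefree" "HOL-Analysis.Convex"
begin

text \<open>Taking \<open>X d/dX log\<close> of \<open>f = \<Prod>(1 - x^k)^e(k) = \<Prod>(1 - x/\<alpha>\<^sub>i)\<close> shows that
  the sum of \<open>d e(d)\<close> over \<open>d dvd m\<close> is \<open>p(m)\<close>, where \<open>p(m)\<close> is the sum of the \<open>\<alpha>\<^sub>i^(-m)\<close>; Moebius inversion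
  then writes \<open>k e(k)\<close> through the \<open>p(d)\<close> with \<open>d dvd k\<close>. The term \<open>d = k\<close> is \<open>\<alpha>\<^sub>1^(-k)\<close> up to
  \<open>(n - 1) t^k\<close>, where \<open>B = 1/|\<alpha>\<^sub>1| \<ge> t = 1/|\<alpha>\<^sub>2|\<close>, and a proper divisor \<open>d\<close> contributes at most
  \<open>B^d + (n - 1) t^d\<close>. As \<open>B t^(n - 1) \<ge> \<Prod> 1/|\<alpha>\<^sub>i| = |a\<^sub>n| \<ge> 1\<close>, convexity in \<open>d\<close> bounds each such
  contribution by \<open>B^(k/2) + n t^k\<close>, except at \<open>d = k/2\<close>, whose excess is absorbed by the term
  \<open>d = k\<close>.\<close>

unbundle fps_syntax

lemma fps_prod_nth_0: "(\<Prod>k\<in>A. g k) $ 0 = (\<Prod>k\<in>A. g k $ 0)"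
  by (induction A rule: infinite_finite_induct) simp_all

lemma fps_prod_list_nth_0: "(\<Prod>x\<leftarrow>xs. g x) $ 0 = (\<Prod>x\<leftarrow>xs. g x $ 0)"
  by (induction xs) simp_all

lemma fps_sum_list_nth: "(\<Sum>x\<leftarrow>xs. g x) $ n = (\<Sum>x\<leftarrow>xs. g x $ n)"
  by (induction xs) simp_all

lemma fps_mult_one_minus_X_power_power_nth:
  fixes g :: "'a::comm_ring_1 fps"
  assumes "k \<ge> 1" "n \<le> k"
  shows "(g * (1 - fps_X ^ k) ^ j) $ n = g $ n - (if n = k then of_nat j * g $ 0 else 0)"
proof (induction j)
  case (Suc j)
  define h where "h = g * (1 - fps_X ^ k) ^ j"
  have "h $ 0 = g $ 0"
    using assms by (simp add: h_def fps_nth_power_0 zero_power)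
  moreover have "(fps_X ^ k * h) $ n = (if n = k then h $ 0 else 0)"
    using assms by (auto simp: fps_X_power_mult_nth)
  moreover have "(g * (1 - fps_X ^ k) ^ Suc j) $ n = h $ n - (fps_X ^ k * h) $ n"
    by (simp add: h_def algebra_simps)
  ultimately show ?case
    using Suc by (auto simp: h_def[symmetric] algebra_simps)
qed simp

section \<open>Existence and uniqueness of the exponents\<close>

definition euler_partial_prod :: "(nat \<Rightarrow> int) \<Rightarrow> nat \<Rightarrow> 'a::comm_ring_1 fps" where
  "euler_partial_prod e N = (\<Prod>k\<in>{1..N}. (1 - fps_X ^ k) ^ nat (e k))"

definition euler_product_upto :: "int poly \<Rightarrow> (nat \<Rightarrow> int) \<Rightarrow> nat \<Rightarrow> bool" where
  "euler_product_upto f e N \<longleftrightarrow>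
     (\<forall>n\<le>N. (fps_of_poly f * euler_partial_prod (\<lambda>k. - e k) N) $ n = euler_partial_prod e N $ n)"

lemma euler_product_exps_iff: "euler_product_exps f e \<longleftrightarrow> (\<forall>N. euler_product_upto f e N)"
  unfolding euler_product_exps_def euler_product_upto_def euler_partial_prod_def by blast

lemma euler_partial_prod_nth_0 [simp]: "euler_partial_prod e N $ 0 = 1"
  unfolding euler_partial_prod_def by (simp add: fps_prod_nth_0 fps_nth_power_0 zero_power)

lemma euler_partial_prod_Suc:
  "euler_partial_prod e (Suc N) = euler_partial_prod e N * (1 - fps_X ^ Suc N) ^ nat (e (Suc N))"
  unfolding euler_partial_prod_def by (simp add: atLeastAtMostSuc_conv mult.commute)

lemma euler_partial_prod_cong:
  "(\<And>k. 1 \<le> k \<Longrightarrow> k \<le> N \<Longrightarrow> e k = e' k) \<Longrightarrow> euler_partial_prod e N = euler_partial_prod e' N"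
  unfolding euler_partial_prod_def by (rule prod.cong) auto

lemma euler_product_upto_cong:
  assumes "\<And>k. 1 \<le> k \<Longrightarrow> k \<le> N \<Longrightarrow> e k = e' k"
  shows "euler_product_upto f e N \<longleftrightarrow> euler_product_upto f e' N"
proof -
  have "euler_partial_prod e N = (euler_partial_prod e' N :: int fps)"
    "euler_partial_prod (\<lambda>k. - e k) N = (euler_partial_prod (\<lambda>k. - e' k) N :: int fps)"
    using assms by (auto intro: euler_partial_prod_cong)
  then show ?thesis
    unfolding euler_product_upto_def by simp
qed

lemma euler_product_upto_0: "coeff f 0 = 1 \<Longrightarrow> euler_product_upto f e 0"
  unfolding euler_product_upto_def by simp

definition next_euler_exp :: "int poly \<Rightarrow> (nat \<Rightarrow> int) \<Rightarrow> nat \<Rightarrow> int" where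
  "next_euler_exp f e N =
     euler_partial_prod e N $ Suc N - (fps_of_poly f * euler_partial_prod (\<lambda>k. - e k) N) $ Suc N"

lemma next_euler_exp_cong:
  assumes "\<And>k. 1 \<le> k \<Longrightarrow> k \<le> N \<Longrightarrow> e k = e' k"
  shows "next_euler_exp f e N = next_euler_exp f e' N"
proof -
  have "euler_partial_prod e N = (euler_partial_prod e' N :: int fps)"
    "euler_partial_prod (\<lambda>k. - e k) N = (euler_partial_prod (\<lambda>k. - e' k) N :: int fps)"
    using assms by (auto intro: euler_partial_prod_cong)
  then show ?thesis
    unfolding next_euler_exp_def by simp
qed

lemma euler_product_upto_Suc:
  assumes "coeff f 0 = 1"
  shows "euler_product_upto f e (Suc N) \<longleftrightarrow>
           euler_product_upto f e N \<and> e (Suc N) = next_euler_exp f e N"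
proof -
  define L where "L = fps_of_poly f * euler_partial_prod (\<lambda>k. - e k) N"
  define R :: "int fps" where "R = euler_partial_prod e N"
  have "L $ 0 = 1" using assms by (simp add: L_def)
  then have L: "(fps_of_poly f * euler_partial_prod (\<lambda>k. - e k) (Suc N)) $ n =
      L $ n - (if n = Suc N then int (nat (- e (Suc N))) else 0)" if "n \<le> Suc N" for n
    using fps_mult_one_minus_X_power_power_nth[of "Suc N" n L] that
    by (simp add: L_def euler_partial_prod_Suc mult.assoc)
  have R: "euler_partial_prod e (Suc N) $ n =
      R $ n - (if n = Suc N then int (nat (e (Suc N))) else 0)" if "n \<le> Suc N" for n
    using fps_mult_one_minus_X_power_power_nth[of "Suc N" n R] that
    by (simp add: R_def euler_partial_prod_Suc)
  show ?thesis
    unfolding euler_product_upto_def next_euler_exp_def L_def[symmetric] R_def[symmetric]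
    using L R by (auto simp: le_Suc_eq)
qed

primrec euler_exps_upto :: "int poly \<Rightarrow> nat \<Rightarrow> nat \<Rightarrow> int" where
  "euler_exps_upto f 0 = (\<lambda>_. 0)"
| "euler_exps_upto f (Suc N) =
     (euler_exps_upto f N)(Suc N := next_euler_exp f (euler_exps_upto f N) N)"

lemma euler_exps_upto_mono: "k \<le> N \<Longrightarrow> N \<le> M \<Longrightarrow> euler_exps_upto f M k = euler_exps_upto f N k"
  by (induction M) (auto simp: le_Suc_eq)

lemma euler_product_upto_euler_exps_upto:
  assumes "coeff f 0 = 1"
  shows "euler_product_upto f (euler_exps_upto f N) N"
proof (induction N)
  case 0
  show ?case by (rule euler_product_upto_0[OF assms])
next
  case (Suc N)
  let ?e = "euler_exps_upto f (Suc N)"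
  have "euler_product_upto f ?e N \<longleftrightarrow> euler_product_upto f (euler_exps_upto f N) N"
    by (rule euler_product_upto_cong) simp
  moreover have "next_euler_exp f ?e N = next_euler_exp f (euler_exps_upto f N) N"
    by (rule next_euler_exp_cong) simp
  ultimately have "euler_product_upto f ?e N" "?e (Suc N) = next_euler_exp f ?e N"
    using Suc by simp_all
  then show ?case
    using euler_product_upto_Suc[OF assms] by blast
qed

lemma euler_product_exps_unique:
  assumes f0: "coeff f 0 = 1"
    and e: "euler_product_exps f e" "e 0 = 0" and e': "euler_product_exps f e'" "e' 0 = 0"
  shows "e = e'"
proof
  fix k show "e k = e' k"
  proof (induction k rule: less_induct)
    case (less k)
    show ?case
    proof (cases k)
      case (Suc N)
      have "euler_product_upto f e (Suc N)" "euler_product_upto f e' (Suc N)"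
        using e(1) e'(1) by (simp_all add: euler_product_exps_iff)
      then have "e (Suc N) = next_euler_exp f e N" "e' (Suc N) = next_euler_exp f e' N"
        using euler_product_upto_Suc[OF f0] by blast+
      moreover have "next_euler_exp f e N = next_euler_exp f e' N"
        by (rule next_euler_exp_cong) (use less Suc in simp)
      ultimately show ?thesis
        using Suc by simp
    qed (use e e' in simp)
  qed
qed

lemma euler_product_exps_ef:
  assumes "coeff f 0 = 1"
  shows "euler_product_exps f (ef f)"
proof -
  define e where "e k = euler_exps_upto f k k" for k
  have "euler_product_upto f e N" for N
  proof -
    have "euler_product_upto f e N \<longleftrightarrow> euler_product_upto f (euler_exps_upto f N) N"
      by (rule euler_product_upto_cong) (metis e_def euler_exps_upto_mono order_refl)
    then show ?thesis
      using euler_product_upto_euler_exps_upto[OF assms] by blast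
  qed
  then have e: "euler_product_exps f e \<and> e 0 = 0"
    by (simp add: euler_product_exps_iff e_def)
  then have "euler_product_exps f (ef f) \<and> ef f 0 = 0"
    unfolding ef_def by (rule theI[where P = "\<lambda>e. euler_product_exps f e \<and> e 0 = 0"])
      (use e euler_product_exps_unique[OF assms] in blast)
  then show ?thesis ..
qed

section \<open>The operator \<open>X d/dX log\<close>\<close>

definition fps_XD_log :: "'a::field fps \<Rightarrow> 'a fps" where
  "fps_XD_log g = fps_XD g * inverse g"

lemma fps_XD_nth: "fps_XD g $ n = of_nat n * g $ n"
  by (simp add: fps_XD_def fps_mult_fps_X_deriv_shift)

lemma fps_XD_log_mult_self: "g $ 0 \<noteq> 0 \<Longrightarrow> fps_XD_log g * g = fps_XD g"
  unfolding fps_XD_log_def by (simp add: mult.assoc inverse_mult_eq_1)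

lemma fps_XD_log_unique:
  assumes "g $ 0 \<noteq> 0" "h * g = fps_XD g"
  shows "fps_XD_log g = h"
proof -
  have "(fps_XD_log g - h) * g = 0"
    using fps_XD_log_mult_self[OF assms(1)] assms(2) by (simp add: algebra_simps)
  moreover have "g \<noteq> 0" using assms(1) by auto
  ultimately show ?thesis by simp
qed

lemma fps_XD_log_one [simp]: "fps_XD_log 1 = 0"
  by (rule fps_XD_log_unique) (simp_all add: fps_XD_def)

lemma fps_XD_log_mult:
  assumes "g $ 0 \<noteq> 0" "h $ 0 \<noteq> 0"
  shows "fps_XD_log (g * h) = fps_XD_log g + fps_XD_log h"
proof (rule fps_XD_log_unique)
  show "(g * h) $ 0 \<noteq> 0" using assms by simp
  have "(fps_XD_log g + fps_XD_log h) * (g * h) = (fps_XD_log g * g) * h + g * (fps_XD_log h * h)"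
    by (simp add: algebra_simps)
  also have "\<dots> = fps_XD g * h + g * fps_XD h"
    using assms by (simp add: fps_XD_log_mult_self)
  also have "\<dots> = fps_XD (g * h)"
    by (simp add: fps_XD_def algebra_simps)
  finally show "(fps_XD_log g + fps_XD_log h) * (g * h) = fps_XD (g * h)" .
qed

lemma fps_XD_log_power:
  assumes "g $ 0 \<noteq> 0"
  shows "fps_XD_log (g ^ j) = of_nat j * fps_XD_log g"
  by (induction j) (simp_all add: fps_XD_log_mult fps_nth_power_0 assms algebra_simps)

lemma fps_XD_log_prod:
  "(\<And>k. k \<in> A \<Longrightarrow> g k $ 0 \<noteq> 0) \<Longrightarrow> fps_XD_log (\<Prod>k\<in>A. g k) = (\<Sum>k\<in>A. fps_XD_log (g k))"
  by (induction A rule: infinite_finite_induct) (simp_all add: fps_XD_log_mult fps_prod_nth_0)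

lemma fps_XD_log_prod_list:
  "(\<And>x. x \<in> set xs \<Longrightarrow> g x $ 0 \<noteq> 0) \<Longrightarrow>
     fps_XD_log (\<Prod>x\<leftarrow>xs. g x) = (\<Sum>x\<leftarrow>xs. fps_XD_log (g x))"
proof (induction xs)
  case (Cons a xs)
  then have "(\<Prod>x\<leftarrow>xs. g x) $ 0 \<noteq> 0"
    by (force simp: fps_prod_list_nth_0 prod_list_zero_iff)
  with Cons show ?case by (simp add: fps_XD_log_mult)
qed simp

lemma fps_XD_log_nth_eq:
  assumes g0: "g $ 0 \<noteq> 0" and eq: "\<And>i. i \<le> n \<Longrightarrow> g $ i = h $ i"
  shows "fps_XD_log g $ n = fps_XD_log h $ n"
  using eq
proof (induction n rule: less_induct)
  case (less n)
  have h0: "h $ 0 \<noteq> 0" using g0 less(2)[of 0] by simp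
  have rec: "fps_XD_log p $ n * p $ 0 = of_nat n * p $ n - (\<Sum>i<n. fps_XD_log p $ i * p $ (n - i))"
    if "p $ 0 \<noteq> 0" for p :: "'a fps"
  proof -
    have "(\<Sum>i\<le>n. fps_XD_log p $ i * p $ (n - i)) = of_nat n * p $ n"
      using arg_cong[OF fps_XD_log_mult_self[OF that], of "\<lambda>q. q $ n"]
      by (simp add: fps_mult_nth fps_XD_nth atLeast0AtMost)
    then show ?thesis by (simp add: lessThan_Suc_atMost[symmetric] eq_diff_eq add.commute)
  qed
  have "(\<Sum>i<n. fps_XD_log g $ i * g $ (n - i)) = (\<Sum>i<n. fps_XD_log h $ i * h $ (n - i))"
    by (rule sum.cong) (use less in auto)
  then have "fps_XD_log g $ n * g $ 0 = fps_XD_log h $ n * g $ 0"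
    using rec[OF g0] rec[OF h0] less(2)[of n] less(2)[of 0] by simp
  then show ?case using g0 by simp
qed

lemma fps_XD_log_one_minus_X_power:
  assumes "k \<ge> 1"
  shows "fps_XD_log (1 - fps_X ^ k :: 'a::field fps) =
           Abs_fps (\<lambda>m. if m \<noteq> 0 \<and> k dvd m then - of_nat k else 0)"
    (is "_ = ?L")
proof (rule fps_XD_log_unique)
  show "(1 - fps_X ^ k :: 'a fps) $ 0 \<noteq> 0" using assms by simp
  show "?L * (1 - fps_X ^ k) = fps_XD (1 - fps_X ^ k)"
  proof (rule fps_ext)
    fix m
    have "(?L * (1 - fps_X ^ k)) $ m = ?L $ m - (?L * fps_X ^ k) $ m"
      by (simp add: algebra_simps)
    also have "\<dots> = (if m = k then - of_nat k else 0)"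
    proof (cases "m < k")
      case True
      then have "\<not> (m \<noteq> 0 \<and> k dvd m)" using dvd_imp_le by fastforce
      then show ?thesis using True by (auto simp: fps_X_power_mult_right_nth)
    next
      case False
      then have "k dvd m \<longleftrightarrow> k dvd (m - k)" by (simp add: dvd_minus_self)
      then show ?thesis using False assms by (auto simp: fps_X_power_mult_right_nth)
    qed
    also have "\<dots> = fps_XD (1 - fps_X ^ k) $ m" using assms by (auto simp: fps_XD_nth)
    finally show "(?L * (1 - fps_X ^ k)) $ m = fps_XD (1 - fps_X ^ k) $ m" .
  qed
qed

lemma fps_XD_log_one_minus_const_X:
  "fps_XD_log (1 - fps_const c * fps_X) = Abs_fps (\<lambda>m. if m = 0 then 0 else - (c ^ m))"
    (is "_ = ?L")
proof (rule fps_XD_log_unique)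
  show "(1 - fps_const c * fps_X) $ 0 \<noteq> 0" by simp
  show "?L * (1 - fps_const c * fps_X) = fps_XD (1 - fps_const c * fps_X)"
  proof (rule fps_ext)
    fix m
    have "(?L * (1 - fps_const c * fps_X)) $ m = ?L $ m - c * (fps_X * ?L) $ m"
      by (simp add: algebra_simps)
    also have "\<dots> = fps_XD (1 - fps_const c * fps_X) $ m"
      by (cases m) (auto simp: fps_XD_nth power_eq_if)
    finally show "(?L * (1 - fps_const c * fps_X)) $ m = fps_XD (1 - fps_const c * fps_X) $ m" .
  qed
qed

section \<open>Power sums of the inverse roots\<close>

definition of_int_fps :: "int fps \<Rightarrow> 'a::comm_ring_1 fps" where
  "of_int_fps g = Abs_fps (\<lambda>n. of_int (g $ n))"

lemma of_int_fps_nth [simp]: "of_int_fps g $ n = of_int (g $ n)"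
  by (simp add: of_int_fps_def)

lemma of_int_fps_one [simp]: "of_int_fps 1 = 1"
  by (rule fps_ext) simp

lemma of_int_fps_mult: "of_int_fps (g * h) = of_int_fps g * of_int_fps h"
  by (rule fps_ext) (simp add: fps_mult_nth)

lemma of_int_fps_fps_of_poly: "of_int_fps (fps_of_poly f) = fps_of_poly (map_poly of_int f)"
  by (rule fps_ext) (simp add: coeff_map_poly)

lemma of_int_fps_euler_partial_prod: "of_int_fps (euler_partial_prod e N) = euler_partial_prod e N"
proof (induction N)
  case 0
  show ?case by (simp add: euler_partial_prod_def)
next
  case (Suc N)
  have "of_int_fps (1 - fps_X ^ k) = (1 - fps_X ^ k :: 'a fps)" for k
    by (rule fps_ext) (simp add: fps_X_power_nth)
  then have "of_int_fps ((1 - fps_X ^ k) ^ j) = ((1 - fps_X ^ k) ^ j :: 'a fps)" for k j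
    by (induction j) (simp_all add: of_int_fps_mult)
  then show ?case
    by (simp only: euler_partial_prod_Suc of_int_fps_mult Suc.IH)
qed

definition inverse_power_sum :: "'a::field list \<Rightarrow> nat \<Rightarrow> 'a" where
  "inverse_power_sum xs m = (\<Sum>a\<leftarrow>xs. inverse a ^ m)"

lemma fps_XD_log_prod_list_one_minus_inverse_X_nth:
  assumes "m \<ge> 1"
  shows "fps_XD_log (\<Prod>a\<leftarrow>xs. 1 - fps_const (inverse a) * fps_X) $ m = - inverse_power_sum xs m"
  using assms
  by (simp add: fps_XD_log_prod_list fps_sum_list_nth fps_XD_log_one_minus_const_X
      inverse_power_sum_def uminus_sum_list_map o_def)

lemma fps_XD_log_euler_partial_prod_nth:
  assumes "1 \<le> m" "m \<le> N"
  shows "fps_XD_log (euler_partial_prod e N) $ m = - (\<Sum>k | k dvd m. of_nat k * of_nat (nat (e k)) :: 'a::field)"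
proof -
  have "fps_XD_log (euler_partial_prod e N :: 'a fps) =
      (\<Sum>k\<in>{1..N}. fps_XD_log ((1 - fps_X ^ k) ^ nat (e k)))"
    unfolding euler_partial_prod_def
    by (rule fps_XD_log_prod) (auto simp: fps_nth_power_0 zero_power)
  also have "\<dots> = (\<Sum>k\<in>{1..N}. of_nat (nat (e k)) * fps_XD_log (1 - fps_X ^ k))"
    by (rule sum.cong) (auto simp: fps_XD_log_power)
  finally have "fps_XD_log (euler_partial_prod e N :: 'a fps) $ m =
      (\<Sum>k\<in>{1..N}. of_nat (nat (e k)) * (if k dvd m then - of_nat k else 0))"
    using assms by (simp add: fps_sum_nth fps_XD_log_one_minus_X_power)
  also have "\<dots> = - (\<Sum>k\<in>{1..N}. if k dvd m then of_nat k * of_nat (nat (e k)) else 0)"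
    by (subst sum_negf[symmetric]) (rule sum.cong, auto)
  also have "\<dots> = - (\<Sum>k\<in>{k\<in>{1..N}. k dvd m}. of_nat k * of_nat (nat (e k)))"
    by (subst sum.inter_filter) simp_all
  also have "{k\<in>{1..N}. k dvd m} = {k. k dvd m}"
    using assms by (auto dest: dvd_imp_le intro: Nat.gr0I)
  finally show ?thesis .
qed

lemma fps_prod_list_linear_factors:
  fixes xs :: "'a::field list"
  assumes "0 \<notin> set xs"
  shows "(\<Prod>a\<leftarrow>xs. fps_const (- a) + fps_X) =
           fps_const (\<Prod>a\<leftarrow>xs. - a) * (\<Prod>a\<leftarrow>xs. 1 - fps_const (inverse a) * fps_X)"
  using assms
proof (induction xs)
  case (Cons a xs)
  have "fps_const (- a) + fps_X = fps_const (- a) * (1 - fps_const (inverse a) * fps_X)"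
    using Cons.prems by (simp add: algebra_simps fps_const_mult[symmetric])
  with Cons show ?case by (simp add: mult_ac)
qed simp

context
  fixes f :: "int poly" and \<alpha> :: "complex list"
  assumes f0: "coeff f 0 = 1"
    and roots: "map_poly of_int f = smult (of_int (lead_coeff f)) (\<Prod>a\<leftarrow>\<alpha>. [:- a, 1:])"
begin

lemma lead_coeff_mult_prod_neg_roots: "of_int (lead_coeff f) * (\<Prod>a\<leftarrow>\<alpha>. - a) = 1"
proof -
  have "poly (map_poly of_int f) 0 = (1 :: complex)"
    using f0 by (simp add: poly_0_coeff_0 coeff_map_poly)
  then show ?thesis
    by (subst (asm) roots) (simp add: poly_prod_list[simplified] o_def)
qed

lemma roots_nonzero: "0 \<notin> set \<alpha>"
proof
  assume "0 \<in> set \<alpha>"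
  then have "(0::complex) \<in> set (map uminus \<alpha>)" by force
  then show False
    using lead_coeff_mult_prod_neg_roots by (metis mult_zero_right prod_list_zero_iff zero_neq_one)
qed

lemma fps_of_poly_eq_prod_roots:
  "fps_of_poly (map_poly of_int f) = (\<Prod>a\<leftarrow>\<alpha>. 1 - fps_const (inverse a) * fps_X)"
proof -
  have "fps_of_poly (map_poly of_int f) =
      fps_const (of_int (lead_coeff f)) * (\<Prod>a\<leftarrow>\<alpha>. fps_const (- a) + fps_X)"
    by (subst roots) (simp add: fps_of_poly_smult fps_of_poly_prod_list o_def fps_of_poly_pCons)
  moreover have "fps_const (of_int (lead_coeff f)) * fps_const (\<Prod>a\<leftarrow>\<alpha>. - a) = 1"
    using lead_coeff_mult_prod_neg_roots by (simp add: mult.commute flip: fps_const_mult)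
  ultimately show ?thesis
    using fps_prod_list_linear_factors[OF roots_nonzero] by (simp add: mult.assoc[symmetric])
qed

text \<open>Apply \<open>X d/dX log\<close> to the Euler product truncated at order \<open>m\<close> and compare coefficient \<open>m\<close>.\<close>
lemma inverse_power_sum_eq_divisor_sum:
  assumes "m \<ge> 1"
  shows "inverse_power_sum \<alpha> m = (\<Sum>k | k dvd m. of_nat k * of_int (ef f k))"
proof -
  let ?F = "fps_of_poly (map_poly of_int f) :: complex fps"
  let ?P = "\<lambda>e. euler_partial_prod e m :: complex fps"
  let ?e = "ef f"
  have F0: "?F $ 0 = 1" using f0 by (simp add: coeff_map_poly)
  have "of_int_fps (fps_of_poly f * euler_partial_prod (\<lambda>k. - ?e k) m) $ i =
      of_int_fps (euler_partial_prod ?e m) $ i" if "i \<le> m" for i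
    using euler_product_exps_ef[OF f0] that
    unfolding euler_product_exps_iff euler_product_upto_def by simp
  then have "fps_XD_log (?F * ?P (\<lambda>k. - ?e k)) $ m = fps_XD_log (?P ?e) $ m"
    using F0 by (intro fps_XD_log_nth_eq)
      (simp_all add: of_int_fps_mult of_int_fps_fps_of_poly of_int_fps_euler_partial_prod)
  moreover have "fps_XD_log (?F * ?P (\<lambda>k. - ?e k)) = fps_XD_log ?F + fps_XD_log (?P (\<lambda>k. - ?e k))"
    using F0 by (intro fps_XD_log_mult) simp_all
  ultimately have "fps_XD_log ?F $ m = fps_XD_log (?P ?e) $ m - fps_XD_log (?P (\<lambda>k. - ?e k)) $ m"
    by (simp add: eq_diff_eq)
  also have "\<dots> = - (\<Sum>k | k dvd m. of_nat k * (of_nat (nat (?e k)) - of_nat (nat (- ?e k))))"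
    using assms by (simp add: fps_XD_log_euler_partial_prod_nth sum_subtractf right_diff_distrib)
  also have "\<dots> = - (\<Sum>k | k dvd m. of_nat k * of_int (?e k))"
  proof -
    have "of_nat (nat x) - of_nat (nat (- x)) = (of_int x :: complex)" for x
      by (cases "x \<ge> 0") (simp_all add: of_nat_nat)
    then show ?thesis by simp
  qed
  finally show ?thesis
    using assms by (simp add: fps_of_poly_eq_prod_roots fps_XD_log_prod_list_one_minus_inverse_X_nth)
qed

end

section \<open>Moebius inversion\<close>

definition moebius_mu :: "nat \<Rightarrow> int" where
  "moebius_mu n = (if squarefree n then (-1) ^ card (prime_factors n) else 0)"

lemma abs_moebius_mu_le: "\<bar>moebius_mu n\<bar> \<le> 1"
  by (simp add: moebius_mu_def)

lemma moebius_mu_prime_mult: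
  assumes p: "prime p" and "\<not> p dvd s" "s > 0"
  shows "moebius_mu (p * s) = - moebius_mu s"
proof -
  have "coprime p s" using assms by (simp add: prime_imp_coprime)
  then have "squarefree (p * s) \<longleftrightarrow> squarefree s"
    using squarefree_mult_coprime squarefree_prime[OF p] squarefree_multD(2) by blast
  moreover have "prime_factors (p * s) = insert p (prime_factors s)"
    using assms by (simp add: prime_factors_product prime_prime_factors prime_gt_0_nat)
  moreover have "p \<notin> prime_factors s" using assms by (auto simp: in_prime_factors_iff)
  ultimately show ?thesis by (simp add: moebius_mu_def)
qed

lemma moebius_mu_eq_0: "prime p \<Longrightarrow> p ^ 2 dvd d \<Longrightarrow> moebius_mu d = 0"
  using not_squarefreeI[of p d] prime_gt_1_nat[of p] by (auto simp: moebius_mu_def)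

text \<open>Pair each divisor \<open>s\<close> not divisible by a fixed prime factor \<open>p\<close> with \<open>p s\<close>;
  the remaining divisors are divisible by \<open>p\<^sup>2\<close>.\<close>
lemma sum_moebius_mu_divisors:
  assumes "n > 1"
  shows "(\<Sum>d | d dvd n. moebius_mu d) = 0"
proof -
  obtain p where p: "prime p" "p dvd n" using prime_factor_nat[of n] assms by auto
  define A where "A = {d. d dvd n \<and> \<not> p dvd d}"
  define B where "B = {d. d dvd n \<and> p dvd d \<and> \<not> p ^ 2 dvd d}"
  define C where "C = {d. d dvd n \<and> p ^ 2 dvd d}"
  have fin: "finite A" "finite B" "finite C" using assms by (auto simp: A_def B_def C_def)
  have "B = (\<lambda>s. p * s) ` A"
  proof (intro equalityI subsetI)
    fix d assume "d \<in> (\<lambda>s. p * s) ` A"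
    then obtain s where s: "s dvd n" "\<not> p dvd s" "d = p * s" by (auto simp: A_def)
    then have "p * s dvd n"
      using p by (intro divides_mult) (simp_all add: prime_imp_coprime)
    then show "d \<in> B"
      using s p by (auto simp: B_def power2_eq_square prime_gt_0_nat)
  next
    fix d assume d: "d \<in> B"
    then obtain s where s: "d = p * s" by (auto simp: B_def)
    with d have "s dvd n" "\<not> p dvd s"
      by (auto simp: B_def power2_eq_square intro: dvd_mult_right)
    with s show "d \<in> (\<lambda>s. p * s) ` A" by (auto simp: A_def)
  qed
  moreover have "inj_on (\<lambda>s. p * s) A" using p by (auto simp: inj_on_def prime_gt_0_nat)
  ultimately have "(\<Sum>d\<in>B. moebius_mu d) = (\<Sum>s\<in>A. moebius_mu (p * s))"
    by (simp add: sum.reindex)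
  also have "\<dots> = - (\<Sum>s\<in>A. moebius_mu s)"
    unfolding sum_negf[symmetric] using assms
    by (intro sum.cong refl moebius_mu_prime_mult[OF p(1)]) (auto simp: A_def intro: Nat.gr0I)
  finally have "(\<Sum>d\<in>A. moebius_mu d) + (\<Sum>d\<in>B. moebius_mu d) + (\<Sum>d\<in>C. moebius_mu d) = 0"
    using p by (simp add: C_def moebius_mu_eq_0)
  moreover have "(\<Sum>d | d dvd n. moebius_mu d) =
      (\<Sum>d\<in>A. moebius_mu d) + (\<Sum>d\<in>B. moebius_mu d) + (\<Sum>d\<in>C. moebius_mu d)"
  proof -
    have "{d. d dvd n} = A \<union> B \<union> C" by (auto simp: A_def B_def C_def)
    moreover have "A \<inter> B = {}" "(A \<union> B) \<inter> C = {}" by (auto simp: A_def B_def C_def)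
    ultimately show ?thesis
      using fin by (simp add: sum.union_disjoint)
  qed
  ultimately show ?thesis by simp
qed

lemma sum_moebius_mu_interval:
  assumes "j dvd k" "k > 0"
  shows "(\<Sum>d | j dvd d \<and> d dvd k. moebius_mu (k div d)) = (if j = k then 1 else 0)"
proof -
  obtain q where q: "k = j * q" using assms by blast
  have "j > 0" "q > 0" using q assms by auto
  have "(\<Sum>d | j dvd d \<and> d dvd k. moebius_mu (k div d)) = (\<Sum>t | t dvd q. moebius_mu t)"
  proof (rule sum.reindex_bij_witness[of _ "\<lambda>t. k div t" "\<lambda>d. k div d"])
    fix t assume "t \<in> {t. t dvd q}"
    then obtain u where "q = t * u" by auto
    then show "k div (k div t) = t" "k div t \<in> {d. j dvd d \<and> d dvd k}"
      using q \<open>j > 0\<close> \<open>q > 0\<close> by (auto simp: mult_ac)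
  next
    fix d assume "d \<in> {d. j dvd d \<and> d dvd k}"
    then obtain v w where "d = j * v" "k = d * w" by (auto elim!: dvdE)
    then show "k div (k div d) = d" "k div d \<in> {t. t dvd q}"
      using q \<open>j > 0\<close> \<open>q > 0\<close> by (auto simp: mult_ac)
  qed simp
  also have "\<dots> = (if q = 1 then 1 else 0)"
    using sum_moebius_mu_divisors[of q] \<open>q > 0\<close> by (cases "q = 1") (auto simp: moebius_mu_def)
  also have "q = 1 \<longleftrightarrow> j = k" using q \<open>j > 0\<close> by auto
  finally show ?thesis .
qed

lemma moebius_inversion:
  fixes c P :: "nat \<Rightarrow> 'a::comm_ring_1"
  assumes P: "\<And>m. m \<ge> 1 \<Longrightarrow> P m = (\<Sum>d | d dvd m. c d)" and "k \<ge> 1"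
  shows "(\<Sum>d | d dvd k. of_int (moebius_mu (k div d)) * P d) = c k"
proof -
  have fin: "finite {d. d dvd k}" using assms by simp
  have "(\<Sum>d | d dvd k. of_int (moebius_mu (k div d)) * P d) =
      (\<Sum>d | d dvd k. \<Sum>j | j dvd k \<and> j dvd d. of_int (moebius_mu (k div d)) * c j)"
  proof (rule sum.cong)
    fix d assume d: "d \<in> {d. d dvd k}"
    then have "d \<ge> 1" "{j. j dvd k \<and> j dvd d} = {j. j dvd d}"
      using assms by (auto intro: Nat.gr0I dvd_trans)
    then show "of_int (moebius_mu (k div d)) * P d =
        (\<Sum>j | j dvd k \<and> j dvd d. of_int (moebius_mu (k div d)) * c j)"
      using P by (simp add: sum_distrib_left)
  qed simp
  also have "\<dots> = (\<Sum>j | j dvd k. \<Sum>d | d dvd k \<and> j dvd d. of_int (moebius_mu (k div d)) * c j)"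
    using sum.swap_restrict[OF fin fin, of "\<lambda>d j. of_int (moebius_mu (k div d)) * c j" "\<lambda>d j. j dvd d"]
    by simp
  also have "\<dots> = (\<Sum>j | j dvd k. if j = k then c j else 0)"
  proof (rule sum.cong)
    fix j assume "j \<in> {j. j dvd k}"
    then have "(\<Sum>d | j dvd d \<and> d dvd k. moebius_mu (k div d)) = (if j = k then 1 else 0)"
      using assms by (intro sum_moebius_mu_interval) auto
    then show "(\<Sum>d | d dvd k \<and> j dvd d. of_int (moebius_mu (k div d)) * c j) =
        (if j = k then c j else 0)"
      by (simp add: conj_commute flip: sum_distrib_right of_int_sum)
  qed simp
  also have "\<dots> = c k" using fin by simp
  finally show ?thesis .
qed

section \<open>Real inequalities\<close>

lemma powr_le_convex_comb:
  fixes x \<theta> :: real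
  assumes "x > 0" "0 \<le> \<theta>" "\<theta> \<le> 1"
  shows "x powr \<theta> \<le> 1 - \<theta> + \<theta> * x"
  using Youngs_inequality_0[of \<theta> "1 - \<theta>" x 1] assms by simp

lemma one_plus_power_ge_cubic:
  fixes w :: real
  assumes "w \<ge> 0"
  shows "1 + real n * w + real n * (real n - 1) / 2 * w^2
           + real n * (real n - 1) * (real n - 2) / 6 * w^3 \<le> (1 + w) ^ n"
proof (induction n)
  case (Suc n)
  define A where "A = real n * (real n - 1) / 2"
  define C where "C = real n * (real n - 1) * (real n - 2) / 6"
  have "C \<ge> 0"
  proof (cases "n \<ge> 2")
    case False
    then have "n = 0 \<or> n = 1" by auto
    then show ?thesis by (auto simp: C_def)
  qed (simp add: C_def)
  have "1 + real (Suc n) * w + real (Suc n) * (real (Suc n) - 1) / 2 * w^2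
        + real (Suc n) * (real (Suc n) - 1) * (real (Suc n) - 2) / 6 * w^3
      = (1 + w) * (1 + n * w + A * w^2 + C * w^3) - C * w^4"
    by (simp add: A_def C_def field_simps power2_eq_square power3_eq_cube power4_eq_xxxx)
  also have "\<dots> \<le> (1 + w) * (1 + n * w + A * w^2 + C * w^3)"
    using \<open>C \<ge> 0\<close> assms by simp
  also have "\<dots> \<le> (1 + w) ^ Suc n"
    using Suc assms by (simp add: A_def C_def mult_left_mono)
  finally show ?case .
qed simp

lemma cubic_nonneg:
  fixes v :: real
  assumes "v \<ge> 0"
  shows "18 - 18 * v + 3 * v^2 + v^3 \<ge> 0"
proof (cases "v \<le> 2")
  case True
  have "18 - 18 * v + 3 * v^2 + v^3 = (v - 8/5)^2 * (v + 31/5) + (266/125 - 18/25 * v)"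
    by (simp add: field_simps power2_eq_square power3_eq_cube)
  moreover have "0 \<le> (v - 8/5)^2 * (v + 31/5)" using assms by simp
  ultimately show ?thesis using True by linarith
next
  case False
  have "18 - 18 * v + 5 * v^2 = 5 * (v - 9/5)^2 + 9/5"
    by (simp add: algebra_simps power2_eq_square)
  moreover have "v^3 \<ge> 2 * v^2" using False by (simp add: power2_eq_square power3_eq_cube)
  moreover have "0 \<le> (v - 9/5)^2" by simp
  ultimately show ?thesis by linarith
qed

lemma power_ineq_quadratic:
  fixes u :: real
  assumes "u \<ge> 1"
  shows "(m + 1) * u^2 \<le> u ^ (m + 2) + (m + 1)"
proof -
  define w where "w = u - 1"
  have "w \<ge> 0" using assms by (simp add: w_def)
  have "1 + real (m + 2) * w + real (m + 2) * (real (m + 2) - 1) / 2 * w^2 \<le> u ^ (m + 2)"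
  proof -
    have "0 \<le> real (m + 2) * (real (m + 2) - 1) * (real (m + 2) - 2) / 6 * w^3"
      using \<open>w \<ge> 0\<close> by simp
    moreover have "(1 + w) ^ (m + 2) = u ^ (m + 2)" by (simp add: w_def)
    ultimately show ?thesis
      using one_plus_power_ge_cubic[OF \<open>w \<ge> 0\<close>, of "m + 2"] by linarith
  qed
  moreover have "1 + real (m + 2) * w + real (m + 2) * (real (m + 2) - 1) / 2 * w^2 + (real m + 1)
      - (real m + 1) * u^2 = (1 - m * w)^2 / 2 + 1/2 + m * w^2 / 2"
    by (simp add: w_def field_simps power2_eq_square)
  moreover have "(1 - m * w)^2 / 2 + 1/2 + m * w^2 / 2 \<ge> 0" by simp
  ultimately show ?thesis by linarith
qed

lemma power_ineq_quadratic_linear: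
  fixes u :: real
  assumes "u \<ge> 1"
  shows "(real m + 1) * u^2 + 2 * real m * u \<le> u ^ (m + 2) + 3 * (real m + 1)"
proof -
  define w where "w = u - 1"
  define v where "v = m * w"
  define S where "S = 1 + real (m + 2) * w + real (m + 2) * (real (m + 2) - 1) / 2 * w^2
      + real (m + 2) * (real (m + 2) - 1) * (real (m + 2) - 2) / 6 * w^3"
  define P where "P = 18 - 18 * v + 3 * v^2 + v^3"
  define Q where "Q = real m * w^2 / 2 + (3 * real m ^ 2 + 2 * real m) * w^3 / 6"
  have "w \<ge> 0" "v \<ge> 0" using assms by (simp_all add: w_def v_def)
  have "S \<le> u ^ (m + 2)"
    using one_plus_power_ge_cubic[OF \<open>w \<ge> 0\<close>, of "m + 2"] by (simp add: S_def w_def)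
  moreover have "S + 3 * (real m + 1) - (real m + 1) * u^2 - 2 * real m * u
      = P / 6 + Q"
    by (simp add: S_def P_def Q_def w_def v_def field_simps power2_eq_square power3_eq_cube)
  moreover have "Q \<ge> 0"
    using \<open>w \<ge> 0\<close> by (simp add: Q_def)
  moreover have "P \<ge> 0"
    using cubic_nonneg[OF \<open>v \<ge> 0\<close>] by (simp add: P_def)
  ultimately show ?thesis by linarith
qed

lemma power_ineq_linear:
  fixes u :: real
  assumes "u \<ge> 1"
  shows "real m * u \<le> u ^ (m + 2) + (real m + 2)"
proof -
  have "1 + real (m + 2) * (u - 1) \<le> u ^ (m + 2)"
    using Bernoulli_inequality[of "u - 1" "m + 2"] assms by simp
  then show ?thesis using assms by (simp add: algebra_simps)
qed

context
  fixes a y :: real and m :: nat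
  assumes a: "a \<ge> 1" and y: "y > 0" and ay: "a * y ^ m \<ge> 1"
begin

text \<open>For \<open>y < 1\<close>, an inequality in \<open>u = 1/y \<ge> 1\<close> with leading term \<open>u\<^bsup>m+2\<^esup>\<close> scales to one
  with leading term \<open>a \<ge> u\<^sup>m\<close>.\<close>
lemma le_scaled_if_less_1:
  assumes "y < 1" "q \<le> (1 / y) ^ (m + 2) + c"
  shows "q * y^2 \<le> a + c * y^2"
proof -
  have "(1 / y) ^ (m + 2) * y^2 = 1 / y ^ m"
    using y by (simp add: power_add power_one_over field_simps power2_eq_square)
  moreover have "1 / y ^ m \<le> a"
    using ay y by (simp add: divide_le_eq mult.commute)
  moreover have "q * y^2 \<le> ((1 / y) ^ (m + 2) + c) * y^2"
    using assms(2) by (simp add: mult_right_mono)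
  ultimately show ?thesis by (simp add: distrib_right)
qed

lemma one_plus_m_le_bound: "real m + 1 \<le> a + (real m + 1) * y^2"
proof (cases "y < 1")
  case True
  have "(real m + 1) * (1 / y)^2 \<le> (1 / y) ^ (m + 2) + (real m + 1)"
    by (rule power_ineq_quadratic) (use True y in simp)
  then have "(real m + 1) * (1 / y)^2 * y^2 \<le> a + (real m + 1) * y^2"
    by (rule le_scaled_if_less_1[OF True])
  moreover have "(real m + 1) * (1 / y)^2 * y^2 = real m + 1"
    using y by (simp add: field_simps)
  ultimately show ?thesis by simp
next
  case False
  then have "1 \<le> y^2" by (simp add: one_le_power)
  then have "real m + 1 \<le> (real m + 1) * y^2"
    using mult_left_mono[of 1 "y^2" "real m + 1"] by simp
  then show ?thesis using a by linarith
qed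

lemma two_thirds_chord_le_bound: "real m + 1 + 2 * real m * y \<le> a + 3 * (real m + 1) * y^2"
proof (cases "y < 1")
  case True
  have "(real m + 1) * (1 / y)^2 + 2 * real m * (1 / y) \<le> (1 / y) ^ (m + 2) + 3 * (real m + 1)"
    by (rule power_ineq_quadratic_linear) (use True y in simp)
  then have "((real m + 1) * (1 / y)^2 + 2 * real m * (1 / y)) * y^2 \<le> a + 3 * (real m + 1) * y^2"
    by (rule le_scaled_if_less_1[OF True])
  moreover have "((real m + 1) * (1 / y)^2 + 2 * real m * (1 / y)) * y^2 = real m + 1 + 2 * real m * y"
    using y by (simp add: field_simps power2_eq_square)
  ultimately show ?thesis by simp
next
  case False
  then have "y \<le> y^2" by (simp add: power2_eq_square)
  then have "2 * real m * y \<le> 2 * (real m + 1) * y^2"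
    by (intro mult_mono) (use y in auto)
  then show ?thesis using one_plus_m_le_bound unfolding mult.assoc by linarith
qed

lemma m_y_le_bound: "real m * y \<le> a + (real m + 2) * y^2"
proof (cases "y < 1")
  case True
  have "real m * (1 / y) \<le> (1 / y) ^ (m + 2) + (real m + 2)"
    by (rule power_ineq_linear) (use True y in simp)
  then have "real m * (1 / y) * y^2 \<le> a + (real m + 2) * y^2"
    by (rule le_scaled_if_less_1[OF True])
  moreover have "real m * (1 / y) * y^2 = real m * y"
    using y by (simp add: power2_eq_square)
  ultimately show ?thesis by simp
next
  case False
  then have "y \<le> y^2" by (simp add: power2_eq_square)
  then have "real m * y \<le> (real m + 2) * y^2"
    by (intro mult_mono) (use y in auto)
  then show ?thesis using a by linarith
qed

text \<open>The chord through the values at \<open>\<theta> = 0\<close> and \<open>\<theta> = 1\<close> stays below the bound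
  on \<open>[0, 2/3]\<close>, since it does so at both ends.\<close>
lemma chord_le_bound:
  assumes "0 \<le> \<theta>" "\<theta> \<le> 2/3"
  shows "(1 - \<theta>) * (real m + 1) + \<theta> * (a + real m * y) \<le> a + (real m + 1) * y^2"
proof -
  define R where "R = a + (real m + 1) * y^2"
  have "real m + 1 \<le> R" using one_plus_m_le_bound by (simp add: R_def)
  moreover have "(real m + 1) + 2 * (a + real m * y) \<le> 3 * R"
    using two_thirds_chord_le_bound by (simp add: R_def algebra_simps)
  moreover have "(1 - \<theta>) * (real m + 1) + \<theta> * (a + real m * y) =
      (1 - 3/2 * \<theta>) * (real m + 1) + \<theta> / 2 * ((real m + 1) + 2 * (a + real m * y))"
    by (simp add: algebra_simps)
  ultimately have "(1 - \<theta>) * (real m + 1) + \<theta> * (a + real m * y) \<le>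
      (1 - 3/2 * \<theta>) * R + \<theta> / 2 * (3 * R)"
    using assms by (auto intro!: add_mono mult_left_mono)
  also have "\<dots> = R" by (simp add: algebra_simps)
  finally show ?thesis by (simp add: R_def)
qed

lemma powr_terms_le:
  assumes "0 \<le> \<theta>" "\<theta> \<le> 2/3"
  shows "a powr \<theta> + real m * y powr \<theta> \<le> a + (real m + 1) * y^2"
proof -
  have "a powr \<theta> + real m * y powr \<theta> \<le> (1 - \<theta> + \<theta> * a) + real m * (1 - \<theta> + \<theta> * y)"
    using assms a y by (intro add_mono mult_left_mono powr_le_convex_comb) auto
  also have "\<dots> = (1 - \<theta>) * (real m + 1) + \<theta> * (a + real m * y)"
    by (simp add: algebra_simps)
  also have "\<dots> \<le> a + (real m + 1) * y^2"
    using chord_le_bound assms by blast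
  finally show ?thesis .
qed

end

text \<open>With \<open>a = B\<^bsup>k/2\<^esup>\<close> and \<open>y = t\<^bsup>k/2\<^esup>\<close>, the term of a divisor \<open>d\<close> is
  \<open>a\<^bsup>\<theta>\<^esup> + m y\<^bsup>\<theta>\<^esup>\<close> with \<open>\<theta> = 2d/k\<close>; only \<open>d = k/2\<close> has \<open>\<theta> > 2/3\<close>, and its excess is paid for
  by the term \<open>m t\<^sup>k\<close> of \<open>d = k\<close>.\<close>
lemma divisor_sum_le:
  fixes B t :: real and m k :: nat
  assumes B: "B \<ge> 1" and t: "t > 0" and Bt: "B * t ^ m \<ge> 1" and k: "k \<ge> 1"
  shows "(\<Sum>d | d dvd k \<and> d < k. B ^ d + m * t ^ d) + m * t ^ k
           \<le> real (num_divisors k) * (B powr (k / 2) + (real m + 1) * t ^ k)"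
proof -
  define a where "a = B powr (k / 2)"
  define y where "y = t powr (k / 2)"
  define R where "R = a + (real m + 1) * y^2"
  define D where "D = {d. d dvd k \<and> d < k}"
  have a: "a \<ge> 1" using B by (simp add: a_def ge_one_powr_ge_zero)
  have y: "y > 0" using t by (simp add: y_def)
  have "a * y ^ m = (B * t ^ m) powr (k / 2)"
    using B t by (simp add: a_def y_def powr_mult powr_powr powr_realpow [symmetric] mult.commute)
  then have ay: "a * y ^ m \<ge> 1" using Bt by (simp add: ge_one_powr_ge_zero)
  have y2: "y^2 = t ^ k"
    using t by (simp add: y_def powr_realpow [symmetric] powr_powr)
  have powr_form: "B ^ d + m * t ^ d = a powr (2 * d / k) + m * y powr (2 * d / k)" for d
    using B t k by (simp add: a_def y_def powr_powr powr_realpow)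
  have small: "B ^ d + m * t ^ d \<le> R" if d: "d \<in> D" "2 * d \<noteq> k" for d
  proof -
    obtain q where q: "k = d * q" using d by (auto simp: D_def)
    with d k have "q \<noteq> 0" "q \<noteq> 1" "q \<noteq> 2" by (auto simp: D_def)
    then have "q \<ge> 3" by presburger
    then have "3 * d \<le> k" using q by (metis mult.commute mult_le_mono2)
    then have "2 * d / k \<le> 2 / 3" using k by (simp add: field_simps)
    then show ?thesis
      unfolding powr_form R_def using powr_terms_le[OF a y ay] by simp
  qed
  have "real m * t ^ k \<le> (real m + 1) * t ^ k"
    using t by (intro mult_right_mono) auto
  then have last: "m * t ^ k \<le> R"
    unfolding R_def y2 using a by linarith
  have "(\<Sum>d\<in>D. B ^ d + m * t ^ d) + m * t ^ k \<le> real (card D + 1) * R"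
  proof (cases "even k")
    case True
    define h where "h = k div 2"
    have fin: "finite D" using k by (simp add: D_def)
    have h: "h \<in> D" "2 * h = k" using True k by (auto simp: D_def h_def)
    have "(\<Sum>d\<in>D - {h}. B ^ d + m * t ^ d) \<le> real (card (D - {h})) * R"
      by (intro sum_bounded_above small) (use h in auto)
    moreover have "2 * real h / real k = 1" using h k by simp
    then have "B ^ h + m * t ^ h = a + m * y"
      using powr_form[of h] a y by simp
    moreover have "a + m * y + m * t ^ k \<le> 2 * R"
      using m_y_le_bound[OF a y ay] y2 by (simp add: R_def algebra_simps)
    moreover have "card D = card (D - {h}) + 1"
      using card_Suc_Diff1[OF fin h(1)] by simp
    ultimately show ?thesis
      using sum.remove[OF fin h(1), of "\<lambda>d. B ^ d + m * t ^ d"] by (simp add: algebra_simps)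
  next
    case False
    then have "(\<Sum>d\<in>D. B ^ d + m * t ^ d) \<le> real (card D) * R"
      by (intro sum_bounded_above small) auto
    then show ?thesis using last by (simp add: algebra_simps)
  qed
  moreover have "card {d. d dvd k} = card D + 1"
  proof -
    have "{d. d dvd k} = insert k D" using k by (auto simp: D_def dest: dvd_imp_le)
    then show ?thesis using k by (simp add: D_def)
  qed
  ultimately show ?thesis by (simp add: num_divisors_def D_def R_def a_def y2)
qed

lemma norm_prod_list: "norm (prod_list xs :: 'a::real_normed_div_algebra) = prod_list (map norm xs)"
  by (induction xs) (simp_all add: norm_mult)

lemma inverse_prod_list: "inverse (prod_list xs :: 'a::field) = prod_list (map inverse xs)"
  by (induction xs) (simp_all add: inverse_mult_distrib)

lemma norm_inverse_power_sum_le: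
  fixes xs :: "'a::real_normed_field list" and t :: real
  assumes "\<And>a. a \<in> set xs \<Longrightarrow> norm (inverse a) \<le> t"
  shows "norm (inverse_power_sum xs d) \<le> length xs * t ^ d"
  using assms
proof (induction xs)
  case (Cons x xs)
  have "norm (inverse x) \<le> t" using Cons.prems by simp
  then have "norm (inverse x ^ d) \<le> t ^ d"
    unfolding norm_power by (rule power_mono) simp
  moreover have "norm (inverse_power_sum (x # xs) d) \<le> norm (inverse x ^ d) + norm (inverse_power_sum xs d)"
    by (simp add: inverse_power_sum_def norm_triangle_ineq)
  ultimately show ?case
    using Cons by (simp add: algebra_simps)
qed (simp add: inverse_power_sum_def)

lemma proper_divisor_power_sum_le:
  fixes B :: real
  assumes "B \<ge> 1" "k \<ge> 1"
  shows "(\<Sum>d | d dvd k \<and> d < k. B ^ d) \<le> real (num_divisors k) * B powr (k / 2)"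
proof -
  have "(\<Sum>d | d dvd k \<and> d < k. B ^ d) \<le> real (card {d. d dvd k \<and> d < k}) * B powr (k / 2)"
  proof (rule sum_bounded_above)
    fix d assume d: "d \<in> {d. d dvd k \<and> d < k}"
    then obtain q where q: "k = d * q" by blast
    with d assms have "q \<noteq> 0" "q \<noteq> 1" by auto
    then have "q \<ge> 2" by presburger
    then have "2 * d \<le> k" using q by (metis mult.commute mult_le_mono2)
    then show "B ^ d \<le> B powr (k / 2)"
      using assms by (simp add: powr_realpow[symmetric] powr_mono)
  qed
  also have "\<dots> \<le> real (num_divisors k) * B powr (k / 2)"
    unfolding num_divisors_def using assms
    by (intro mult_right_mono of_nat_mono card_mono) auto
  finally show ?thesis .
qed

lemma prod_list_le_power:
  fixes xs :: "real list"
  assumes "\<And>x. x \<in> set xs \<Longrightarrow> 0 \<le> x \<and> x \<le> t"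
  shows "prod_list xs \<le> t ^ length xs"
  using assms
proof (induction xs)
  case (Cons x xs)
  then have "0 \<le> x" "x \<le> t" "prod_list xs \<le> t ^ length xs" "0 \<le> prod_list xs"
    by (auto intro: prod_list_nonneg)
  then show ?case by (simp add: mult_mono)
qed simp

lemma norm_powr_uminus: "(z :: 'a::real_normed_field) \<noteq> 0 \<Longrightarrow> norm z powr (- r) = norm (inverse z) powr r"
  by (simp add: powr_minus norm_inverse inverse_powr)

context
  fixes f :: "int poly" and \<alpha> :: "complex list"
  assumes f0: "coeff f 0 = 1"
    and roots: "map_poly of_int f = smult (of_int (lead_coeff f)) (\<Prod>a\<leftarrow>\<alpha>. [:- a, 1:])"
begin

lemma prod_norm_inverse_roots: "(\<Prod>a\<leftarrow>\<alpha>. norm (inverse a)) = \<bar>of_int (lead_coeff f)\<bar>"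
proof -
  have "inverse (\<Prod>a\<leftarrow>\<alpha>. - a) = (of_int (lead_coeff f) :: complex)"
    using lead_coeff_mult_prod_neg_roots[OF f0 roots] by (simp add: inverse_unique mult.commute)
  then have "norm (\<Prod>a\<leftarrow>\<alpha>. inverse (- a)) = norm (of_int (lead_coeff f) :: complex)"
    by (simp add: inverse_prod_list o_def)
  then show ?thesis
    by (simp add: norm_prod_list o_def)
qed

lemma norm_ef_error_le:
  assumes "k \<ge> 1"
  shows "norm (of_nat k * of_int (ef f k) - b) \<le>
           (\<Sum>d | d dvd k \<and> d < k. norm (inverse_power_sum \<alpha> d)) + norm (inverse_power_sum \<alpha> k - b)"
proof -
  let ?P = "inverse_power_sum \<alpha>"
  define D where "D = {d. d dvd k \<and> d < k}"
  have fin: "finite D" and Dk: "{d. d dvd k} = insert k D" and "k \<notin> D"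
    using assms by (auto simp: D_def dest: dvd_imp_le)
  have "of_nat k * of_int (ef f k) = (\<Sum>d | d dvd k. of_int (moebius_mu (k div d)) * ?P d)"
    by (rule moebius_inversion[symmetric])
      (use inverse_power_sum_eq_divisor_sum[OF f0 roots] assms in auto)
  also have "\<dots> = ?P k + (\<Sum>d\<in>D. of_int (moebius_mu (k div d)) * ?P d)"
    using assms fin \<open>k \<notin> D\<close> unfolding Dk by (simp add: moebius_mu_def)
  finally have "of_nat k * of_int (ef f k) - b =
      (?P k - b) + (\<Sum>d\<in>D. of_int (moebius_mu (k div d)) * ?P d)"
    by simp
  then have "norm (of_nat k * of_int (ef f k) - b) \<le>
      norm (?P k - b) + norm (\<Sum>d\<in>D. of_int (moebius_mu (k div d)) * ?P d)"
    by (metis norm_triangle_ineq)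
  also have "norm (\<Sum>d\<in>D. of_int (moebius_mu (k div d)) * ?P d) \<le> (\<Sum>d\<in>D. norm (?P d))"
  proof (rule order_trans[OF norm_sum sum_mono])
    fix d
    show "norm (of_int (moebius_mu (k div d)) * ?P d) \<le> norm (?P d)"
      using abs_moebius_mu_le[of "k div d"] by (simp add: norm_mult mult_left_le_one_le)
  qed
  finally show ?thesis by (simp add: D_def add.commute)
qed

lemma one_le_prod_norm_inverse_roots: "(\<Prod>a\<leftarrow>\<alpha>. norm (inverse a)) \<ge> 1"
proof -
  have "lead_coeff f \<noteq> 0"
    using lead_coeff_mult_prod_neg_roots[OF f0 roots] by auto
  then show ?thesis
    unfolding prod_norm_inverse_roots by linarith
qed

lemma norm_ef_error_single_root:
  assumes "length \<alpha> = 1" "k \<ge> 1"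
  shows "norm (of_nat k * of_int (ef f k) - inverse (\<alpha> ! 0) ^ k)
           \<le> real (num_divisors k) * norm (\<alpha> ! 0) powr (- real k / 2)"
proof -
  obtain a0 where \<alpha>: "\<alpha> = [a0]" using assms(1) by (cases \<alpha>) auto
  have "a0 \<noteq> 0" using roots_nonzero[OF f0 roots] by (simp add: \<alpha>)
  have "norm (inverse a0) \<ge> 1"
    using one_le_prod_norm_inverse_roots by (simp add: \<alpha>)
  have "norm (of_nat k * of_int (ef f k) - inverse a0 ^ k) \<le> (\<Sum>d | d dvd k \<and> d < k. norm (inverse a0) ^ d)"
    using norm_ef_error_le[OF assms(2), of "inverse a0 ^ k"]
    by (simp add: \<alpha> inverse_power_sum_def norm_power)
  also have "\<dots> \<le> real (num_divisors k) * norm (inverse a0) powr (k / 2)"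
    by (rule proper_divisor_power_sum_le) fact+
  finally show ?thesis
    using norm_powr_uminus[OF \<open>a0 \<noteq> 0\<close>, of "k / 2"] by (simp add: \<alpha>)
qed

lemma norm_ef_error_two_roots:
  assumes sorted: "sorted_wrt (\<lambda>a b. norm a \<le> norm b) \<alpha>" and "length \<alpha> \<ge> 2" and k: "k \<ge> 1"
  shows "norm (of_nat k * of_int (ef f k) - inverse (\<alpha> ! 0) ^ k)
           \<le> real (num_divisors k) *
              (norm (\<alpha> ! 0) powr (- real k / 2) + real (length \<alpha>) * norm (\<alpha> ! 1) powr (- real k))"
proof -
  obtain a0 a1 rest where \<alpha>: "\<alpha> = a0 # a1 # rest"
    using \<open>length \<alpha> \<ge> 2\<close> by (metis Suc_le_length_iff numeral_2_eq_2)
  define m where "m = length rest + 1"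
  define B where "B = norm (inverse a0)"
  define t where "t = norm (inverse a1)"
  have "a0 \<noteq> 0" "a1 \<noteq> 0" using roots_nonzero[OF f0 roots] by (auto simp: \<alpha>)
  then have "t > 0" by (simp add: t_def)
  have tail: "norm (inverse a) \<le> t" if "a \<in> set (a1 # rest)" for a
  proof -
    have "norm a1 \<le> norm a" using sorted that by (auto simp: \<alpha>)
    then show ?thesis using \<open>a1 \<noteq> 0\<close> by (simp add: t_def norm_inverse le_imp_inverse_le)
  qed
  have "t \<le> B"
    using sorted \<open>a0 \<noteq> 0\<close> by (simp add: \<alpha> t_def B_def norm_inverse le_imp_inverse_le)
  have "(\<Prod>a\<leftarrow>a1 # rest. norm (inverse a)) \<le> t ^ length (map (\<lambda>a. norm (inverse a)) (a1 # rest))"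
    by (rule prod_list_le_power) (use tail in auto)
  then have "(\<Prod>a\<leftarrow>a1 # rest. norm (inverse a)) \<le> t ^ m"
    by (simp add: m_def)
  then have "(\<Prod>a\<leftarrow>\<alpha>. norm (inverse a)) \<le> B * t ^ m"
    by (simp add: \<alpha> B_def mult_left_mono)
  then have Bt: "B * t ^ m \<ge> 1"
    using one_le_prod_norm_inverse_roots by linarith
  have B: "B \<ge> 1"
  proof (rule ccontr)
    assume "\<not> B \<ge> 1"
    then have "B * t ^ m \<le> B * B ^ m"
      using \<open>t \<le> B\<close> \<open>0 < t\<close> by (intro mult_left_mono power_mono) (auto simp: B_def)
    also have "\<dots> < 1"
      using \<open>\<not> B \<ge> 1\<close> \<open>t \<le> B\<close> \<open>0 < t\<close> power_Suc_less_one[of B m] by simp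
    finally show False using Bt by simp
  qed
  have split: "inverse_power_sum \<alpha> d = inverse a0 ^ d + inverse_power_sum (a1 # rest) d" for d
    by (simp add: \<alpha> inverse_power_sum_def)
  have tail_sum: "norm (inverse_power_sum (a1 # rest) d) \<le> m * t ^ d" for d
    using norm_inverse_power_sum_le[of "a1 # rest" t d] tail by (simp add: m_def)
  have "norm (inverse_power_sum \<alpha> d) \<le> B ^ d + m * t ^ d" for d
    using norm_triangle_ineq[of "inverse a0 ^ d" "inverse_power_sum (a1 # rest) d"] tail_sum[of d]
    by (simp add: split B_def norm_power)
  then have "(\<Sum>d | d dvd k \<and> d < k. norm (inverse_power_sum \<alpha> d))
      \<le> (\<Sum>d | d dvd k \<and> d < k. B ^ d + m * t ^ d)"
    by (rule sum_mono)
  moreover have "norm (inverse_power_sum \<alpha> k - inverse a0 ^ k) \<le> m * t ^ k"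
    using tail_sum[of k] by (simp add: split)
  ultimately have "norm (of_nat k * of_int (ef f k) - inverse a0 ^ k)
      \<le> (\<Sum>d | d dvd k \<and> d < k. B ^ d + m * t ^ d) + m * t ^ k"
    using norm_ef_error_le[OF k, of "inverse a0 ^ k"] by linarith
  also have "\<dots> \<le> real (num_divisors k) * (B powr (k / 2) + (real m + 1) * t ^ k)"
    by (rule divisor_sum_le[OF B \<open>0 < t\<close> Bt k])
  also have "B powr (k / 2) = norm (\<alpha> ! 0) powr (- real k / 2)"
    using norm_powr_uminus[OF \<open>a0 \<noteq> 0\<close>, of "k / 2"] by (simp add: \<alpha> B_def)
  also have "t ^ k = norm (\<alpha> ! 1) powr (- real k)"
    using norm_powr_uminus[OF \<open>a1 \<noteq> 0\<close>, of k] \<open>0 < t\<close> by (simp add: \<alpha> t_def powr_realpow)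
  also have "real m + 1 = real (length \<alpha>)" by (simp add: \<alpha> m_def)
  finally show ?thesis by (simp add: \<alpha>)
qed

end

lemma norm_diff_divide_of_nat:
  fixes x y :: "'a::real_normed_field"
  assumes "k \<ge> 1"
  shows "norm (x - y / of_nat k) = norm (of_nat k * x - y) / real k"
proof -
  have "x - y / of_nat k = (of_nat k * x - y) / of_nat k"
    using assms by (simp add: field_simps)
  then show ?thesis by (simp add: norm_divide)
qed

theorem corollary3p8:
  fixes f :: "int poly" and \<alpha> :: "complex list"
  assumes f0: "coeff f 0 = 1"
    and deg: "degree f \<ge> 1"
    and roots: "map_poly of_int f = smult (of_int (lead_coeff f)) (\<Prod>a\<leftarrow>\<alpha>. [:- a, 1:])"
    and len: "length \<alpha> = degree f"
    and sorted: "sorted_wrt (\<lambda>a b. norm a \<le> norm b) \<alpha>"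
    and sep: "degree f \<ge> 2 \<Longrightarrow> norm (\<alpha> ! 0) < norm (\<alpha> ! 1)"
  shows "(degree f \<ge> 2 \<longrightarrow> (\<forall>k::nat. k \<ge> 1 \<longrightarrow>
            norm (of_int (ef f k) - inverse ((\<alpha> ! 0) ^ k) / of_nat k)
            \<le> real (num_divisors k) / real k *
               (norm (\<alpha> ! 0) powr (- real k / 2)
                + real (degree f) * norm (\<alpha> ! 1) powr (- real k))))
       \<and> (degree f = 1 \<longrightarrow> (\<forall>k::nat. k \<ge> 1 \<longrightarrow>
            norm (of_int (ef f k) - inverse ((\<alpha> ! 0) ^ k) / of_nat k)
            \<le> real (num_divisors k) / real k * norm (\<alpha> ! 0) powr (- real k / 2)))"
proof (intro conjI impI allI)
  fix k :: nat assume "degree f \<ge> 2" "k \<ge> 1"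
  then show "norm (of_int (ef f k) - inverse ((\<alpha> ! 0) ^ k) / of_nat k)
      \<le> real (num_divisors k) / real k *
         (norm (\<alpha> ! 0) powr (- real k / 2) + real (degree f) * norm (\<alpha> ! 1) powr (- real k))"
    using norm_ef_error_two_roots[OF f0 roots sorted, of k] len
    by (simp add: norm_diff_divide_of_nat power_inverse divide_right_mono)
next
  fix k :: nat assume "degree f = 1" "k \<ge> 1"
  then show "norm (of_int (ef f k) - inverse ((\<alpha> ! 0) ^ k) / of_nat k)
      \<le> real (num_divisors k) / real k * norm (\<alpha> ! 0) powr (- real k / 2)"
    using norm_ef_error_single_root[OF f0 roots, of k] len
    by (simp add: norm_diff_divide_of_nat power_inverse divide_right_mono)
qed

end
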